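(* Let $a,b,c$ be positive numbers with $a<b<c$, $b-a<c_0<a$, $0<c_1<2a-b$ and $\lfloor c/b\rfloor\ge2$, where $c_0=c-\lfloor c/b\rfloor b$ and $c_1=\lfloor c/b\rfloor b-\lfloor\lfloor c/b\rfloor b/a\rfloor a$. Then $\mathcal S_{a,b,c}=\emptyset$ if and only if for every $t\in\mathbb R$ there exists $t_0\in[c_0+a-b,c_0)$ such that $$\lim_{n\to\infty}\frac1n\sum_{k=0}^{n-1}f\big((R_{a,b,c})^k(t)\big)=f(t_0)$$ for every continuous $a$-periodic function $f:\mathbb R\to\mathbb C$.
   Context: For $a,b,c>0$ and $t\in\mathbb R$, $\mathbf M_{a,b,c}(t)=(\chi_{[0,c)}(t-\mu+\lambda))_{\mu\in a\mathbb Z,\lambda\in b\mathbb Z}$ is the infinite matrix with rows indexed by $a\mathbb Z$ and columns by $b\mathbb Z$, acting by $(\mathbf M_{a,b,c}(t)\mathbf x)(\mu)=\sum_{\lambda\in b\mathbb Z}\chi_{[0,c)}(t-\mu+\lambda)\mathbf x(\lambda)$. $\mathcal B_b^0$ is the set of vectors $(\mathbf x(\lambda))_{\lambda\in b\mathbb Z}$ with entries in $\{0,1\}$ and $\mathbf x(0)=1$. $\mathbf 1$ denotes the vector indexed by $a\mathbb Z$ with all entries $1$. $\mathcal S_{a,b,c}=\{t:\mathbf M_{a,b,c}(t)\mathbf x=\mathbf 1\text{ for some }\mathbf x\in\mathcal B_b^0\}$. $R_{a,b,c}(t)=t+\lfloor c/b\rfloor b+b$ if $t\in[0,c_0+a-b)+a\mathbb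 Z$, $R_{a,b,c}(t)=t$ if $t\in[c_0+a-b,c_0)+a\mathbb Z$, $R_{a,b,c}(t)=t+\lfloor c/b\rfloor b$ if $t\in[c_0,a)+a\mathbb Z$; $(R_{a,b,c})^k$ is the $k$-fold iterate. $A+a\mathbb Z=\{x+ak:x\in A,k\in\mathbb Z\}$. *)

theory Defs
  imports "HOL-Analysis.Analysis"
begin

definition c0 :: "real \<Rightarrow> real \<Rightarrow> real \<Rightarrow> real" where
  "c0 a b c = c - of_int \<lfloor>c / b\<rfloor> * b"

definition c1 :: "real \<Rightarrow> real \<Rightarrow> real \<Rightarrow> real" where
  "c1 a b c = of_int \<lfloor>c / b\<rfloor> * b - of_int \<lfloor>of_int \<lfloor>c / b\<rfloor> * b / a\<rfloor> * a"

text \<open>Row mu = a*m (m integer) of M(t) x, where x is indexed by lambda = b*k (k integer).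
  The sum runs over the (finite) set of k for which the indicator is nonzero.\<close>
definition M_apply :: "real \<Rightarrow> real \<Rightarrow> real \<Rightarrow> real \<Rightarrow> (int \<Rightarrow> real) \<Rightarrow> int \<Rightarrow> real" where
  "M_apply a b c t x m =
     (\<Sum>k\<in>{k::int. t - a * of_int m + b * of_int k \<in> {0..<c}}. x k)"

definition B0 :: "(int \<Rightarrow> real) set" where
  "B0 = {x. (\<forall>k. x k \<in> {0, 1}) \<and> x 0 = 1}"

definition S_set :: "real \<Rightarrow> real \<Rightarrow> real \<Rightarrow> real set" where
  "S_set a b c = {t. \<exists>x\<in>B0. \<forall>m::int. M_apply a b c t x m = 1}"

definition plus_aZ :: "real set \<Rightarrow> real \<Rightarrow> real set" where
  "plus_aZ A a = {x + a * of_int k | x k. x \<in> A}"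

definition R :: "real \<Rightarrow> real \<Rightarrow> real \<Rightarrow> real \<Rightarrow> real" where
  "R a b c t =
     (if t \<in> plus_aZ {0..<c0 a b c + a - b} a then t + of_int \<lfloor>c / b\<rfloor> * b + b
      else if t \<in> plus_aZ {c0 a b c + a - b..<c0 a b c} a then t
      else t + of_int \<lfloor>c / b\<rfloor> * b)"

end

(*
  Write [c0 + a - b, c0) for the hole.  If M(t) x = 1 with x in B0, every window of rows contains
  exactly one support point of x, and the window inequalities force the gap between consecutive
  support points to be the step of R: floor(c/b) b + b below the hole and floor(c/b) b above it
  (modulo a).  So the R-orbit of a point of S never meets the hole.  Conversely, an orbit avoiding
  the hole reduces modulo a to an orbit of a piecewise rotation rho of [0, a) minus the hole; this
  orbit accumulates from the right at some point, and since rho and its inverse are continuous from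
  the right, limits along the orbit produce a two-sided rho-orbit, which lifts to a solution of
  M(t) x = 1.  Hence S is empty iff every orbit falls into the hole, where R is the identity and the
  averages converge.  An orbit avoiding the hole never spends two consecutive steps near a point t0
  of the hole, because below the hole R rotates by c1 + b - a, so a narrow periodic bump at t0 has
  averages at most about 1/2.
*)

theory Submission
  imports Defs "HOL-Library.Real_Mod" "HOL-Library.Periodic_Fun"
begin

lemma rmod_decomp: "0 < m \<Longrightarrow> x = x rmod m + of_int \<lfloor>x / m\<rfloor> * m"
  by (simp add: rmod_def)

lemma rmod_add_of_int_mult [simp]: "(x + of_int n * m) rmod m = x rmod m"
  by (metis add.right_neutral rmod_add rmod_rmod rmod_self_multiple_int)

lemma rmod_add_rmod_left: "(x rmod m + y) rmod m = (x + y) rmod m"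
  by (metis rmod_add rmod_rmod)

lemma rmod_add_right_cancel: "(x + s) rmod m = (y + s) rmod m \<Longrightarrow> x rmod m = y rmod m"
  using rcong_add_right_cancel unfolding rcong_def by blast

lemma rmod_add_small:
  assumes "0 < m" "0 \<le> q" "q < m" "0 \<le> d" "d < m"
  shows "(q + d) rmod m = q + d \<or> (q + d) rmod m < d"
proof (cases "q + d < m")
  case False
  then have "(q + d) rmod m = q + d - m"
    using assms by (intro rmod_unique[where n = 1]) auto
  then show ?thesis using assms by auto
qed (use assms in auto)

lemma periodic_rmod:
  assumes "\<And>x. f (x + p) = f x"
  shows "f (x rmod p) = f x"
proof -
  interpret periodic_fun_simple f p by unfold_locales (rule assms)
  obtain n where "x = x rmod p + of_int n * p"
    using rcong_altdef[of "x rmod p" x p] by (auto simp: rcong_def)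
  then show ?thesis by (metis plus_of_int)
qed

lemma averages_tendsto_eventually_const:
  fixes z :: "nat \<Rightarrow> 'a::real_normed_field"
  assumes "\<And>n. k \<le> n \<Longrightarrow> z n = y"
  shows "(\<lambda>n. (1 / of_nat n) * (\<Sum>j<n. z j)) \<longlonglongrightarrow> y"
proof -
  define A where "A = (\<Sum>j<k. z j - y)"
  have "A / of_nat n + y = (1 / of_nat n) * (\<Sum>j<n. z j)" if "max k 1 \<le> n" for n
  proof -
    have "(\<Sum>j<n. z j) = (\<Sum>j<n. z j - y) + of_nat n * y"
      by (simp add: sum_subtractf)
    also have "(\<Sum>j<n. z j - y) = A"
      unfolding A_def using that assms by (intro sum.mono_neutral_right) auto
    finally show ?thesis using that by (simp add: field_simps)
  qed
  then have "\<forall>\<^sub>F n in sequentially. A / of_nat n + y = (1 / of_nat n) * (\<Sum>j<n. z j)"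
    using eventually_ge_at_top by (rule eventually_mono[rotated])
  moreover have "(\<lambda>n. A * (1 / of_nat n) + y) \<longlonglongrightarrow> A * 0 + y"
    by (intro tendsto_intros lim_1_over_n)
  ultimately show ?thesis by (auto elim: Lim_transform_eventually)
qed

lemma averages_tendsto_fixed_point:
  assumes "T ((T ^^ k) t) = (T ^^ k) t"
  shows "(\<lambda>n. (1 / of_nat n) * (\<Sum>j<n. f ((T ^^ j) t))) \<longlonglongrightarrow>
    (f ((T ^^ k) t) :: 'a::real_normed_field)"
proof (rule averages_tendsto_eventually_const)
  have stays: "(T ^^ (i + k)) t = (T ^^ k) t" for i
    by (induction i) (simp_all add: assms)
  show "f ((T ^^ n) t) = f ((T ^^ k) t)" if "k \<le> n" for n
    using that stays[of "n - k"] by simp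
qed

lemma averages_not_tendsto_1:
  fixes G :: "nat \<Rightarrow> real"
  assumes G01: "\<And>k. 0 \<le> G k" "\<And>k. G k \<le> 1"
    and isolated: "\<And>k. 0 < G k \<Longrightarrow> G (Suc k) = 0"
  shows "\<not> (\<lambda>n. (\<Sum>k<n. G k) / of_nat n) \<longlonglongrightarrow> 1"
proof
  have pair: "G k + G (Suc k) \<le> 1" for k
    using isolated[of k] G01[of k] G01[of "Suc k"] by (cases "G k > 0") auto
  have bound: "2 * (\<Sum>k<n. G k) + G n \<le> of_nat n + 1" for n
  proof (induction n)
    case (Suc n)
    then show ?case using pair[of n] by simp
  qed (use G01 in simp)
  assume "(\<lambda>n. (\<Sum>k<n. G k) / of_nat n) \<longlonglongrightarrow> 1"
  then have "\<forall>\<^sub>F n in sequentially. 3/4 < (\<Sum>k<n. G k) / of_nat n"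
    by (rule order_tendstoD) simp
  then have "\<forall>\<^sub>F n in sequentially. 3/4 < (\<Sum>k<n. G k) / of_nat n \<and> 2 \<le> n"
    using eventually_ge_at_top by (rule eventually_conj)
  then obtain n where n: "3/4 < (\<Sum>k<n. G k) / of_nat n" "2 \<le> n"
    using eventually_happens'[OF sequentially_bot] by blast
  then have "3/4 * of_nat n < (\<Sum>k<n. G k)" by (simp add: field_simps)
  with bound[of n] G01(1)[of n] n(2) show False by linarith
qed

definition lattice :: "real \<Rightarrow> real set" where
  "lattice p = range (\<lambda>n::int. of_int n * p)"

lemma infdist_lattice: "infdist y (lattice p) = (INF n. \<bar>y - of_int n * p\<bar>)"
  by (simp add: infdist_notempty lattice_def dist_real_def image_image)

lemma infdist_lattice_ge: "(\<And>n::int. e \<le> \<bar>y - of_int n * p\<bar>) \<Longrightarrow> e \<le> infdist y (lattice p)"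
  unfolding infdist_lattice by (rule cINF_greatest) auto

lemma infdist_lattice_lt:
  "infdist y (lattice p) < e \<Longrightarrow> \<exists>n::int. \<bar>y - of_int n * p\<bar> < e"
  using infdist_lattice_ge[of e y p] by (meson not_le)

lemma infdist_lattice_shift_le: "infdist (y + of_int k * p) (lattice p) \<le> infdist y (lattice p)"
proof (rule infdist_lattice_ge)
  fix n :: int
  have "of_int (n + k) * p \<in> lattice p"
    unfolding lattice_def by (rule range_eqI[of _ _ "n + k"]) simp
  then have "infdist (y + of_int k * p) (lattice p) \<le> dist (y + of_int k * p) (of_int (n + k) * p)"
    by (rule infdist_le)
  also have "\<dots> = \<bar>y - of_int n * p\<bar>"
    by (simp add: dist_real_def algebra_simps)
  finally show "infdist (y + of_int k * p) (lattice p) \<le> \<bar>y - of_int n * p\<bar>" .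
qed

lemma infdist_lattice_periodic: "infdist (y + p) (lattice p) = infdist y (lattice p)"
  using infdist_lattice_shift_le[of y 1 p] infdist_lattice_shift_le[of "y + p" "-1" p] by simp

definition lattice_bump :: "real \<Rightarrow> real \<Rightarrow> real \<Rightarrow> real" where
  "lattice_bump p \<epsilon> y = max 0 (1 - infdist y (lattice p) / \<epsilon>)"

lemma continuous_on_lattice_bump: "continuous_on A (lattice_bump p \<epsilon>)"
  unfolding lattice_bump_def divide_inverse by (intro continuous_intros)

lemma lattice_bump_periodic: "lattice_bump p \<epsilon> (y + p) = lattice_bump p \<epsilon> y"
  by (simp add: lattice_bump_def infdist_lattice_periodic)

lemma lattice_bump_0 [simp]: "lattice_bump p \<epsilon> 0 = 1"
proof -
  have "0 \<in> lattice p" unfolding lattice_def by (rule range_eqI[of _ _ 0]) simp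
  then show ?thesis by (simp add: lattice_bump_def)
qed

lemma lattice_bump_bounds: "0 < \<epsilon> \<Longrightarrow> 0 \<le> lattice_bump p \<epsilon> y \<and> lattice_bump p \<epsilon> y \<le> 1"
  using infdist_nonneg[of y "lattice p"] by (simp add: lattice_bump_def)

lemma lattice_bump_pos_imp_near:
  assumes "0 < \<epsilon>" "0 < lattice_bump p \<epsilon> y"
  shows "\<exists>n::int. \<bar>y - of_int n * p\<bar> < \<epsilon>"
proof (rule infdist_lattice_lt)
  show "infdist y (lattice p) < \<epsilon>"
    using assms by (auto simp: lattice_bump_def less_max_iff_disj field_simps)
qed

lemma lattice_bump_far_eq_0:
  assumes "0 < \<epsilon>" "\<And>n::int. \<epsilon> \<le> \<bar>y - of_int n * p\<bar>"
  shows "lattice_bump p \<epsilon> y = 0"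
  using infdist_lattice_ge[OF assms(2)] assms(1) by (simp add: lattice_bump_def)

definition right_tendsto :: "(nat \<Rightarrow> real) \<Rightarrow> real \<Rightarrow> bool" where
  "right_tendsto z \<tau> \<longleftrightarrow> (\<forall>\<epsilon>>0. \<forall>\<^sub>F n in sequentially. \<tau> \<le> z n \<and> z n < \<tau> + \<epsilon>)"

definition right_accumulation :: "(nat \<Rightarrow> real) \<Rightarrow> real \<Rightarrow> bool" where
  "right_accumulation z \<tau> \<longleftrightarrow> (\<forall>\<epsilon>>0. \<exists>\<^sub>F n in sequentially. \<tau> \<le> z n \<and> z n < \<tau> + \<epsilon>)"

lemma right_tendsto_eventually_ge: "right_tendsto z \<tau> \<Longrightarrow> \<forall>\<^sub>F n in sequentially. \<tau> \<le> z n"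
  unfolding right_tendsto_def by (metis (mono_tags, lifting) eventually_mono zero_less_one)

lemma right_tendsto_eventually_less:
  "right_tendsto z \<tau> \<Longrightarrow> \<tau> < u \<Longrightarrow> \<forall>\<^sub>F n in sequentially. z n < u"
  unfolding right_tendsto_def by (drule spec[of _ "u - \<tau>"]) (auto elim: eventually_mono)

lemma right_tendsto_less:
  assumes "right_tendsto z \<tau>" "\<forall>\<^sub>F n in sequentially. z n < u"
  shows "\<tau> < u"
proof -
  have "\<forall>\<^sub>F n in sequentially. \<tau> < u"
    using right_tendsto_eventually_ge[OF assms(1)] assms(2) by eventually_elim simp
  then show ?thesis by simp
qed

lemma right_tendsto_cong:
  assumes "right_tendsto z \<tau>" "\<forall>\<^sub>F n in sequentially. z n = z' n"
  shows "right_tendsto z' \<tau>"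
  unfolding right_tendsto_def
proof (intro allI impI)
  fix \<epsilon> :: real assume "0 < \<epsilon>"
  with assms(1) have "\<forall>\<^sub>F n in sequentially. \<tau> \<le> z n \<and> z n < \<tau> + \<epsilon>"
    by (simp add: right_tendsto_def)
  with assms(2) show "\<forall>\<^sub>F n in sequentially. \<tau> \<le> z' n \<and> z' n < \<tau> + \<epsilon>"
    by eventually_elim auto
qed

lemma right_tendsto_add_const: "right_tendsto z \<tau> \<Longrightarrow> right_tendsto (\<lambda>n. z n + s) (\<tau> + s)"
  unfolding right_tendsto_def by (auto elim!: allE impE elim: eventually_mono)

lemma right_tendsto_rmod:
  assumes "0 < m" "right_tendsto z \<tau>"
  shows "right_tendsto (\<lambda>n. z n rmod m) (\<tau> rmod m)"
  unfolding right_tendsto_def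
proof (intro allI impI)
  fix \<epsilon> :: real assume "0 < \<epsilon>"
  define q where "q = \<tau> rmod m"
  have \<tau>: "\<tau> = q + of_int \<lfloor>\<tau> / m\<rfloor> * m" using rmod_decomp[OF assms(1)] by (simp add: q_def)
  have q: "0 \<le> q" "q < m" using assms(1) by (simp_all add: q_def rmod_nonneg rmod_less)
  have "0 < min \<epsilon> (m - q)" using \<open>0 < \<epsilon>\<close> q by simp
  with assms(2) have "\<forall>\<^sub>F n in sequentially. \<tau> \<le> z n \<and> z n < \<tau> + min \<epsilon> (m - q)"
    by (simp add: right_tendsto_def)
  then show "\<forall>\<^sub>F n in sequentially. q \<le> z n rmod m \<and> z n rmod m < q + \<epsilon>"
  proof eventually_elim
    case (elim n)
    have "z n rmod m = q + (z n - \<tau>)"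
      using elim q \<tau> by (intro rmod_unique[where n = "\<lfloor>\<tau> / m\<rfloor>"]) (auto simp: abs_of_pos assms(1))
    moreover have "min \<epsilon> (m - q) \<le> \<epsilon>" by simp
    ultimately show ?case using elim by linarith
  qed
qed

lemma right_tendsto_rmod_add:
  "0 < m \<Longrightarrow> right_tendsto z \<tau> \<Longrightarrow> right_tendsto (\<lambda>n. (z n + s) rmod m) ((\<tau> + s) rmod m)"
  using right_tendsto_rmod right_tendsto_add_const by blast

lemma right_accumulation_imp_subseq:
  assumes "right_accumulation z \<tau>"
  obtains r where "\<And>n. n \<le> r n" "right_tendsto (\<lambda>n. z (r n)) \<tau>"
proof
  define r where "r n = (SOME k. n \<le> k \<and> \<tau> \<le> z k \<and> z k < \<tau> + 1 / Suc n)" for n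
  have r: "n \<le> r n \<and> \<tau> \<le> z (r n) \<and> z (r n) < \<tau> + 1 / Suc n" for n
    unfolding r_def
  proof (rule someI_ex)
    have "0 < 1 / real (Suc n)" by simp
    with assms show "\<exists>k. n \<le> k \<and> \<tau> \<le> z k \<and> z k < \<tau> + 1 / Suc n"
      unfolding right_accumulation_def frequently_sequentially by blast
  qed
  then show "n \<le> r n" for n by blast
  show "right_tendsto (\<lambda>n. z (r n)) \<tau>"
    unfolding right_tendsto_def
  proof (intro allI impI)
    fix \<epsilon> :: real assume "0 < \<epsilon>"
    with LIMSEQ_inverse_real_of_nat have "\<forall>\<^sub>F n in sequentially. inverse (real (Suc n)) < \<epsilon>"
      by (rule order_tendstoD)
    then show "\<forall>\<^sub>F n in sequentially. \<tau> \<le> z (r n) \<and> z (r n) < \<tau> + \<epsilon>"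
    proof eventually_elim
      case (elim n)
      then show ?case using r[of n] by (simp add: inverse_eq_divide)
    qed
  qed
qed

lemma periodic_orbit_right_accumulation:
  assumes orbit: "\<And>n. z (Suc n) = F (z n)" and "i < j" "z i = z j"
  shows "right_accumulation z (z i)"
proof -
  define P where "P = j - i"
  have shift: "z (i + k + P) = z (i + k)" for k
  proof (induction k)
    case 0
    then show ?case using assms by (simp add: P_def)
  next
    case (Suc k)
    then show ?case using orbit by (metis add_Suc add_Suc_right)
  qed
  have periodic: "z (i + q * P) = z i" for q
  proof (induction q)
    case (Suc q)
    have "z (i + Suc q * P) = z (i + q * P + P)" by (simp add: algebra_simps)
    also have "\<dots> = z i" using shift Suc by simp
    finally show ?case .
  qed simp
  have "i + M * P \<ge> M" for M
  proof -
    have "M \<le> M * P" using \<open>i < j\<close> by (simp add: P_def Suc_le_eq)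
    then show ?thesis by linarith
  qed
  then show ?thesis
    unfolding right_accumulation_def frequently_sequentially using periodic by fastforce
qed

lemma int_crossing:
  assumes "P (k0::int)" "\<not> P (k0 + int n)"
  shows "\<exists>k. P k \<and> \<not> P (k + 1)"
  using assms
proof (induction n arbitrary: k0)
  case (Suc n)
  then show ?case
    by (cases "P (k0 + 1)") (auto simp: add.assoc dest: Suc.IH[of "k0 + 1"])
qed simp

lemma B0_window_unique:
  assumes "x \<in> B0" "M_apply a b c t x m = 1"
  shows "\<exists>!k. t - a * of_int m + b * of_int k \<in> {0..<c} \<and> x k = 1"
proof -
  define I where "I = {k::int. t - a * of_int m + b * of_int k \<in> {0..<c}}"
  have sum: "sum x I = 1" using assms(2) by (simp add: M_apply_def I_def)
  then have "finite I" by (metis sum.infinite zero_neq_one)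
  have "x k = 0 \<or> x k = 1" for k using assms(1) by (auto simp: B0_def)
  then have "sum x I = sum x {k\<in>I. x k = 1}"
    using \<open>finite I\<close> by (intro sum.mono_neutral_right) auto
  also have "\<dots> = of_nat (card {k\<in>I. x k = 1})" by simp
  finally have "card {k\<in>I. x k = 1} = 1" using sum by simp
  then obtain k0 where "{k\<in>I. x k = 1} = {k0}" using card_1_singletonE by blast
  then show ?thesis unfolding I_def by (intro ex1I[of _ k0]) (auto simp: set_eq_iff)
qed

locale abc_hyps =
  fixes a b c :: real
  assumes a_pos: "0 < a" and a_less_b: "a < b" and b_less_c: "b < c"
    and c0_gt: "b - a < c0 a b c" and c0_lt: "c0 a b c < a"
    and c1_pos: "0 < c1 a b c" and c1_lt: "c1 a b c < 2 * a - b"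
    and floor_ge_2: "2 \<le> \<lfloor>c / b\<rfloor>"
begin

definition N :: int where "N = \<lfloor>c / b\<rfloor>"
definition \<beta> :: real where "\<beta> = c0 a b c"
definition \<alpha> :: real where "\<alpha> = \<beta> + a - b"

lemma N_ge_2: "2 \<le> N"
  using floor_ge_2 by (simp add: N_def)

lemma c_eq: "c = of_int N * b + \<beta>"
  by (simp add: N_def \<beta>_def c0_def)

lemma b_pos: "0 < b"
  using a_pos a_less_b by simp

lemma \<beta>_gt: "b - a < \<beta>" and \<beta>_lt: "\<beta> < a"
  using c0_gt c0_lt by (simp_all add: \<beta>_def)

lemma \<alpha>_pos: "0 < \<alpha>" and \<alpha>_less_\<beta>: "\<alpha> < \<beta>"
  using \<beta>_gt a_less_b by (simp_all add: \<alpha>_def)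

lemma rmod_a_bounds: "0 \<le> x rmod a" "x rmod a < a"
  using a_pos by (simp_all add: rmod_nonneg rmod_less)

lemma rmod_a_eq: "0 \<le> y \<Longrightarrow> y < a \<Longrightarrow> (y + of_int n * a) rmod a = y"
  using a_pos by simp

lemma plus_aZ_iff: "A \<subseteq> {0..<a} \<Longrightarrow> x \<in> plus_aZ A a \<longleftrightarrow> x rmod a \<in> A"
  using rmod_decomp[OF a_pos, of x] rmod_a_eq
  unfolding plus_aZ_def by (auto simp: mult.commute subset_iff)

lemma R_low: "x rmod a < \<alpha> \<Longrightarrow> R a b c x = x + of_int N * b + b"
  using plus_aZ_iff[of "{0..<\<alpha>}" x] \<alpha>_less_\<beta> \<beta>_lt rmod_a_bounds[of x]
  by (simp add: R_def N_def flip: \<alpha>_def \<beta>_def)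

lemma R_hole: "x rmod a \<in> {\<alpha>..<\<beta>} \<Longrightarrow> R a b c x = x"
  using plus_aZ_iff[of "{0..<\<alpha>}" x] plus_aZ_iff[of "{\<alpha>..<\<beta>}" x] \<alpha>_pos \<beta>_lt
  by (simp add: R_def N_def flip: \<alpha>_def \<beta>_def)

lemma R_high: "\<beta> \<le> x rmod a \<Longrightarrow> R a b c x = x + of_int N * b"
  using plus_aZ_iff[of "{0..<\<alpha>}" x] plus_aZ_iff[of "{\<alpha>..<\<beta>}" x] \<alpha>_pos \<alpha>_less_\<beta> \<beta>_lt
  by (simp add: R_def N_def flip: \<alpha>_def \<beta>_def)

end

section \<open>Orbits of points of S avoid the hole\<close>

context abc_hyps
begin

lemma int_less_if_b_mult_less: "b * of_int k < b * of_int l \<Longrightarrow> k < l"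
  using b_pos by (simp add: mult_less_cancel_left_pos)

lemma window_gap:
  assumes lo: "c \<le> x rmod a + b * of_int d" and hi: "x rmod a + b * of_int d < c + a"
  shows "x rmod a \<notin> {\<alpha>..<\<beta>}" and "R a b c x = x + b * of_int d"
proof -
  define u where "u = x rmod a"
  have u: "0 \<le> u" "u < a" using rmod_a_bounds by (simp_all add: u_def)
  have c: "c = b * of_int N + \<beta>" using c_eq by (simp add: mult.commute)
  show "x rmod a \<notin> {\<alpha>..<\<beta>}"
  proof
    assume "x rmod a \<in> {\<alpha>..<\<beta>}"
    then have hole: "\<alpha> \<le> u" "u < \<beta>" by (simp_all add: u_def)
    have "N < d"
      using lo hole c by (intro int_less_if_b_mult_less) (simp add: u_def)
    moreover have "d < N + 1"
      using hi hole c by (intro int_less_if_b_mult_less) (simp add: u_def \<alpha>_def algebra_simps)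
    ultimately show False by simp
  qed
  then consider "u < \<alpha>" | "\<beta> \<le> u" by (force simp: u_def)
  then show "R a b c x = x + b * of_int d"
  proof cases
    case 1
    have "N < d"
      using lo 1 c a_less_b by (intro int_less_if_b_mult_less) (simp add: u_def \<alpha>_def)
    moreover have "d < N + 2"
      using hi u c a_less_b \<beta>_lt by (intro int_less_if_b_mult_less) (simp add: u_def algebra_simps)
    ultimately have "d = N + 1" by simp
    with 1 show ?thesis by (simp add: R_low u_def algebra_simps)
  next
    case 2
    have "N - 1 < d"
      using lo u c a_less_b \<beta>_gt by (intro int_less_if_b_mult_less) (simp add: u_def algebra_simps)
    moreover have "d < N + 1"
      using hi 2 c a_less_b by (intro int_less_if_b_mult_less) (simp add: u_def algebra_simps)
    ultimately have "d = N" by simp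
    with 2 show ?thesis by (simp add: R_high u_def algebra_simps)
  qed
qed

lemma S_orbit_step:
  assumes x: "x \<in> B0" and M: "\<forall>m. M_apply a b c t x m = 1" and p: "x p = 1"
  shows "(t + b * of_int p) rmod a \<notin> {\<alpha>..<\<beta>}"
    and "\<exists>p'. x p' = 1 \<and> R a b c (t + b * of_int p) = t + b * of_int p'"
proof -
  define r where "r = t + b * of_int p"
  define u where "u = r rmod a"
  define m where "m = \<lfloor>r / a\<rfloor>"
  have r: "r = u + a * of_int m" using rmod_decomp[OF a_pos, of r] by (simp add: u_def m_def mult.commute)
  have u: "0 \<le> u" "u < a" using rmod_a_bounds by (simp_all add: u_def)
  let ?window = "\<lambda>m k. t - a * of_int m + b * of_int k \<in> {0..<c}"
  have "?window m p" using r u a_less_b b_less_c by (simp add: r_def)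
  obtain j where j: "?window (m + 1) j" "x j = 1"
    using B0_window_unique[OF x M[rule_format, of "m + 1"]] by blast
  have "j \<noteq> p"
    using j r u by (auto simp: r_def algebra_simps)
  then have "\<not> ?window m j"
    using B0_window_unique[OF x M[rule_format, of m]] \<open>?window m p\<close> p j(2) by blast
  define d where "d = j - p"
  have "t - a * of_int m + b * of_int j = u + b * of_int d"
    and "t - a * of_int (m + 1) + b * of_int j = u + b * of_int d - a"
    using r by (simp_all add: r_def d_def algebra_simps)
  then have lo: "c \<le> u + b * of_int d" and hi: "u + b * of_int d < c + a"
    using j(1) \<open>\<not> ?window m j\<close> a_pos by auto
  show "(t + b * of_int p) rmod a \<notin> {\<alpha>..<\<beta>}"
    using window_gap(1)[of r d] lo hi by (simp add: u_def r_def)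
  have "R a b c r = t + b * of_int j"
    using window_gap(2)[of r d] lo hi by (simp add: u_def r_def d_def algebra_simps)
  then show "\<exists>p'. x p' = 1 \<and> R a b c (t + b * of_int p) = t + b * of_int p'"
    using j(2) by (auto simp: r_def)
qed

lemma S_orbit_avoids_hole:
  assumes "t \<in> S_set a b c"
  shows "(R a b c ^^ k) t rmod a \<notin> {\<alpha>..<\<beta>}"
proof -
  obtain x where x: "x \<in> B0" and M: "\<forall>m. M_apply a b c t x m = 1"
    using assms by (auto simp: S_set_def)
  have "\<exists>p. x p = 1 \<and> (R a b c ^^ k) t = t + b * of_int p" for k
  proof (induction k)
    case 0
    then show ?case using x by (auto simp: B0_def intro: exI[of _ 0])
  next
    case (Suc k)
    then show ?case using S_orbit_step(2)[OF x M] by auto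
  qed
  then show ?thesis using S_orbit_step(1)[OF x M] by metis
qed

end

context abc_hyps
begin

lemma trapped_orbit_averages:
  fixes f :: "real \<Rightarrow> 'a::real_normed_field"
  assumes "(R a b c ^^ k) t rmod a \<in> {\<alpha>..<\<beta>}" and "\<forall>x. f (x + a) = f x"
  shows "(\<lambda>n. (1 / of_nat n) * (\<Sum>j<n. f ((R a b c ^^ j) t))) \<longlonglongrightarrow> f ((R a b c ^^ k) t rmod a)"
  using averages_tendsto_fixed_point[where T = "R a b c"] R_hole[OF assms(1)]
    periodic_rmod[of f a] assms(2) by simp

definition \<omega> :: real where "\<omega> = (of_int N * b + b) rmod a"

lemma \<omega>_eq: "\<omega> = c1 a b c + b - a"
  unfolding \<omega>_def
  by (rule rmod_unique[where n = "\<lfloor>of_int N * b / a\<rfloor> + 1"])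
    (use c1_pos c1_lt a_pos a_less_b in \<open>auto simp: c1_def N_def algebra_simps\<close>)

lemma \<omega>_pos: "0 < \<omega>" and \<omega>_less: "\<omega> < a"
  using c1_pos c1_lt a_less_b by (simp_all add: \<omega>_eq)

lemma near_hole_step_far:
  assumes t0: "t0 \<in> {\<alpha>..<\<beta>}" and avoid: "x rmod a \<notin> {\<alpha>..<\<beta>}"
    and near: "\<bar>x - t0 - of_int n * a\<bar> < \<eta>"
    and \<eta>: "\<eta> \<le> t0 / 2" "\<eta> \<le> (\<beta> - t0) / 2" "\<eta> \<le> \<omega> / 2" "\<eta> \<le> (a - \<omega>) / 2"
  shows "\<eta> \<le> \<bar>R a b c x - t0 - of_int m * a\<bar>"
proof -
  have "(x - of_int n * a) rmod a = x - of_int n * a"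
    using near t0 \<eta> \<beta>_lt by (intro rmod_idem) auto
  then have "x rmod a = x - of_int n * a"
    using rmod_add_of_int_mult[of x "- n" a] by simp
  then have "x rmod a < \<alpha>"
    using avoid near t0 \<eta> by auto
  then have "R a b c x = x + \<omega> + of_int \<lfloor>(of_int N * b + b) / a\<rfloor> * a"
    using rmod_decomp[OF a_pos, of "of_int N * b + b"] by (simp add: R_low \<omega>_def)
  then have R: "R a b c x - t0 - of_int m * a =
      (x - t0 - of_int n * a) + (\<omega> + of_int (n + \<lfloor>(of_int N * b + b) / a\<rfloor> - m) * a)"
    by (simp add: algebra_simps)
  have "2 * \<eta> \<le> \<bar>\<omega> + of_int j * a\<bar>" for j :: int
  proof (cases "0 \<le> j")
    case True
    then have "0 \<le> of_int j * a" using a_pos by simp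
    then show ?thesis using \<eta> \<omega>_pos abs_ge_self[of "\<omega> + of_int j * a"] by linarith
  next
    case False
    then have "of_int j \<le> (- 1 :: real)" by simp
    then have "of_int j * a \<le> - a" using mult_right_mono[of "of_int j" "- 1" a] a_pos by simp
    have "2 * \<eta> \<le> a - \<omega>" using \<eta>(4) by simp
    also have "\<dots> \<le> - (\<omega> + of_int j * a)" using \<open>of_int j * a \<le> - a\<close> by simp
    also have "\<dots> \<le> \<bar>\<omega> + of_int j * a\<bar>" by (rule abs_ge_minus_self)
    finally show ?thesis .
  qed
  with R near show ?thesis by (smt (verit))
qed

lemma avoiding_orbit_averages_not_tendsto:
  assumes avoid: "\<And>k. (R a b c ^^ k) t rmod a \<notin> {\<alpha>..<\<beta>}" and t0: "t0 \<in> {\<alpha>..<\<beta>}"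
  shows "\<exists>f :: real \<Rightarrow> complex. continuous_on UNIV f \<and> (\<forall>x. f (x + a) = f x) \<and>
    \<not> (\<lambda>n. (1 / of_nat n) * (\<Sum>k<n. f ((R a b c ^^ k) t))) \<longlonglongrightarrow> f t0"
proof -
  define \<eta> where "\<eta> = min (min t0 (\<beta> - t0)) (min \<omega> (a - \<omega>)) / 2"
  have \<eta>: "0 < \<eta>" "\<eta> \<le> t0 / 2" "\<eta> \<le> (\<beta> - t0) / 2" "\<eta> \<le> \<omega> / 2" "\<eta> \<le> (a - \<omega>) / 2"
    using t0 \<alpha>_pos \<omega>_pos \<omega>_less by (auto simp: \<eta>_def)
  define f where "f x = complex_of_real (lattice_bump a \<eta> (x - t0))" for x
  define G where "G k = lattice_bump a \<eta> ((R a b c ^^ k) t - t0)" for k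
  have isolated: "G (Suc k) = 0" if pos: "0 < G k" for k
  proof -
    obtain n where near: "\<bar>(R a b c ^^ k) t - t0 - of_int n * a\<bar> < \<eta>"
      using lattice_bump_pos_imp_near[OF \<eta>(1) pos[unfolded G_def]] by blast
    have "\<eta> \<le> \<bar>(R a b c ^^ Suc k) t - t0 - of_int m * a\<bar>" for m
      using near_hole_step_far[OF t0 avoid near \<eta>(2-)] by simp
    then show ?thesis
      unfolding G_def by (intro lattice_bump_far_eq_0 \<eta>(1)) simp
  qed
  have averages: "(1 / of_nat n) * (\<Sum>k<n. f ((R a b c ^^ k) t)) =
      complex_of_real ((\<Sum>k<n. G k) / of_nat n)" for n
    by (simp add: f_def G_def)
  have "f t0 = complex_of_real 1" by (simp add: f_def)
  have "\<not> (\<lambda>n. (1 / of_nat n) * (\<Sum>k<n. f ((R a b c ^^ k) t))) \<longlonglongrightarrow> f t0"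
    unfolding averages \<open>f t0 = complex_of_real 1\<close> tendsto_of_real_iff
    using lattice_bump_bounds[OF \<eta>(1)] isolated
    by (intro averages_not_tendsto_1) (auto simp: G_def)
  moreover have "continuous_on UNIV f"
    unfolding f_def by (intro continuous_intros continuous_on_compose2[OF continuous_on_lattice_bump]) auto
  moreover have "f (x + a) = f x" for x
    using lattice_bump_periodic[of a \<eta> "x - t0"] by (simp add: f_def algebra_simps)
  ultimately show ?thesis by blast
qed

end

section \<open>The induced map on the circle\<close>

context abc_hyps
begin

definition D :: "real set" where "D = {0..<a} - {\<alpha>..<\<beta>}"

definition \<rho> :: "real \<Rightarrow> real" where
  "\<rho> x = (x + of_int N * b + (if x < \<alpha> then b else 0)) rmod a"

definition A :: "real set" where
  "A = {y \<in> {0..<a}. (y - of_int N * b - b) rmod a < 2 * a - b}"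

definition \<rho>_inv :: "real \<Rightarrow> real" where
  "\<rho>_inv y = (let z = (y - of_int N * b - b) rmod a in if z < \<alpha> then z else z + (b - a))"

lemma D_iff: "x \<in> D \<longleftrightarrow> 0 \<le> x \<and> x < \<alpha> \<or> \<beta> \<le> x \<and> x < a"
  using \<alpha>_pos \<alpha>_less_\<beta> \<beta>_lt by (auto simp: D_def)

lemma rmod_R: "x rmod a \<notin> {\<alpha>..<\<beta>} \<Longrightarrow> R a b c x rmod a = \<rho> (x rmod a)"
  using rmod_add_rmod_left[of x a] by (cases "x rmod a < \<alpha>") (auto simp: R_low R_high \<rho>_def add.assoc)

lemma \<rho>_bounds: "0 \<le> \<rho> x" "\<rho> x < a"
  by (simp_all add: \<rho>_def rmod_a_bounds)

lemma \<rho>_in_A_and_\<rho>_inv_\<rho>: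
  assumes "x \<in> D"
  shows "\<rho> x \<in> A \<and> \<rho>_inv (\<rho> x) = x"
proof (cases "x < \<alpha>")
  case True
  have "(\<rho> x - of_int N * b - b) rmod a = x rmod a"
    using True rmod_add_rmod_left[of "x + of_int N * b + b" a "- of_int N * b - b"]
    by (simp add: \<rho>_def algebra_simps)
  also have "\<dots> = x" using assms True \<beta>_lt \<alpha>_less_\<beta> by (simp add: D_iff)
  finally show ?thesis
    using True \<beta>_lt \<rho>_bounds by (simp add: A_def \<rho>_inv_def \<alpha>_def)
next
  case False
  then have x: "\<beta> \<le> x" "x < a" using assms by (auto simp: D_iff)
  have "(\<rho> x - of_int N * b - b) rmod a = (x - b) rmod a"
    using False rmod_add_rmod_left[of "x + of_int N * b" a "- of_int N * b - b"]
    by (simp add: \<rho>_def algebra_simps)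
  also have "\<dots> = x - b + a"
    using x \<beta>_gt a_less_b by (intro rmod_unique[where n = "-1"]) auto
  finally show ?thesis
    using x \<rho>_bounds by (simp add: A_def \<rho>_inv_def \<alpha>_def)
qed

lemma \<rho>_inv_in_D_and_\<rho>_\<rho>_inv:
  assumes "y \<in> A"
  shows "\<rho>_inv y \<in> D \<and> \<rho> (\<rho>_inv y) = y"
proof -
  define z where "z = (y - of_int N * b - b) rmod a"
  have z: "0 \<le> z" "z < 2 * a - b" "0 \<le> y" "y < a"
    using assms rmod_a_bounds by (auto simp: z_def A_def)
  have z_back: "(z + of_int N * b + b) rmod a = y"
    using rmod_add_rmod_left[of "y - of_int N * b - b" a "of_int N * b + b"] z
    by (simp add: z_def algebra_simps)
  show ?thesis
  proof (cases "z < \<alpha>")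
    case True
    then show ?thesis using z z_back by (simp add: \<rho>_inv_def \<rho>_def D_iff flip: z_def)
  next
    case False
    have "\<rho> (z + (b - a)) = (z + of_int N * b + b + of_int (-1) * a) rmod a"
      using False a_less_b by (simp add: \<rho>_def algebra_simps)
    also have "\<dots> = y" by (simp only: rmod_add_of_int_mult z_back)
    finally have "\<rho> (z + (b - a)) = y" .
    then show ?thesis using False z by (simp add: \<rho>_inv_def D_iff \<alpha>_def flip: z_def)
  qed
qed

lemma \<rho>_add_small:
  assumes "x \<in> D" "x + d \<in> D" "0 < d" "d < b - a"
  shows "\<rho> (x + d) = \<rho> x + d \<or> \<rho> (x + d) < d"
proof -
  have "x + d < \<alpha> \<longleftrightarrow> x < \<alpha>"
    using assms by (auto simp: D_iff \<alpha>_def)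
  then have "\<rho> (x + d) = (\<rho> x + d) rmod a"
    using rmod_add_rmod_left[of "x + of_int N * b + (if x < \<alpha> then b else 0)" a d]
    by (simp add: \<rho>_def algebra_simps)
  moreover have "d < a" using assms \<beta>_gt \<beta>_lt by linarith
  ultimately show ?thesis
    using rmod_add_small[OF a_pos \<rho>_bounds[of x], of d] assms by simp
qed

lemma right_tendsto_in_D:
  assumes lim: "right_tendsto z \<tau>" and D: "\<forall>\<^sub>F n in sequentially. z n \<in> D"
  shows "\<tau> \<in> D"
proof -
  have "\<not> \<tau> < 0"
  proof
    assume "\<tau> < 0"
    with lim have "\<forall>\<^sub>F n in sequentially. z n < 0" by (rule right_tendsto_eventually_less)
    with D have "\<forall>\<^sub>F n in sequentially. False" by eventually_elim (simp add: D_def)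
    then show False by simp
  qed
  moreover have "\<tau> < a"
    using D by (intro right_tendsto_less[OF lim]) (auto simp: D_def elim: eventually_mono)
  moreover have "\<not> (\<alpha> \<le> \<tau> \<and> \<tau> < \<beta>)"
  proof
    assume hole: "\<alpha> \<le> \<tau> \<and> \<tau> < \<beta>"
    have "\<forall>\<^sub>F n in sequentially. z n < \<beta>"
      using hole by (intro right_tendsto_eventually_less[OF lim]) simp
    with D right_tendsto_eventually_ge[OF lim] have "\<forall>\<^sub>F n in sequentially. False"
      by eventually_elim (use hole in \<open>auto simp: D_def\<close>)
    then show False by simp
  qed
  ultimately show ?thesis by (auto simp: D_def)
qed

(* rho and rho_inv are translations modulo a on half-open pieces, hence continuous from the right;
   this is why orbits are followed through limits from the right. *)
lemma right_tendsto_\<rho>: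
  assumes lim: "right_tendsto z \<tau>" and D: "\<forall>\<^sub>F n in sequentially. z n \<in> D"
  shows "right_tendsto (\<lambda>n. \<rho> (z n)) (\<rho> \<tau>)"
proof -
  define s where "s = of_int N * b + (if \<tau> < \<alpha> then b else 0)"
  have "\<forall>\<^sub>F n in sequentially. z n < \<alpha> \<longleftrightarrow> \<tau> < \<alpha>"
  proof (cases "\<tau> < \<alpha>")
    case True
    then show ?thesis using right_tendsto_eventually_less[OF lim True] by (auto elim: eventually_mono)
  next
    case False
    then show ?thesis using right_tendsto_eventually_ge[OF lim] by (auto elim: eventually_mono)
  qed
  then have "\<forall>\<^sub>F n in sequentially. (z n + s) rmod a = \<rho> (z n)"
    by eventually_elim (simp add: s_def \<rho>_def add.assoc)
  with right_tendsto_rmod_add[OF a_pos lim, of s] have "right_tendsto (\<lambda>n. \<rho> (z n)) ((\<tau> + s) rmod a)"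
    by (rule right_tendsto_cong)
  moreover have "(\<tau> + s) rmod a = \<rho> \<tau>" by (simp add: s_def \<rho>_def add.assoc)
  ultimately show ?thesis by simp
qed

lemma right_tendsto_\<rho>_inv:
  assumes lim: "right_tendsto z \<tau>" and A: "\<forall>\<^sub>F n in sequentially. z n \<in> A"
  shows "\<tau> \<in> A" and "right_tendsto (\<lambda>n. \<rho>_inv (z n)) (\<rho>_inv \<tau>)"
proof -
  define g where "g x = (x - of_int N * b - b) rmod a" for x
  have lim_g: "right_tendsto (\<lambda>n. g (z n)) (g \<tau>)"
    using right_tendsto_rmod_add[OF a_pos lim, of "- of_int N * b - b"] by (simp add: g_def algebra_simps)
  have "\<not> \<tau> < 0"
  proof
    assume "\<tau> < 0"
    with lim have "\<forall>\<^sub>F n in sequentially. z n < 0" by (rule right_tendsto_eventually_less)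
    with A have "\<forall>\<^sub>F n in sequentially. False" by eventually_elim (simp add: A_def)
    then show False by simp
  qed
  moreover have "\<tau> < a"
    using A by (intro right_tendsto_less[OF lim]) (auto simp: A_def elim: eventually_mono)
  moreover have "g \<tau> < 2 * a - b"
    using A by (intro right_tendsto_less[OF lim_g]) (auto simp: A_def g_def elim: eventually_mono)
  ultimately show "\<tau> \<in> A" by (simp add: A_def g_def)
  define s where "s = (if g \<tau> < \<alpha> then 0 else b - a)"
  have "\<forall>\<^sub>F n in sequentially. g (z n) < \<alpha> \<longleftrightarrow> g \<tau> < \<alpha>"
  proof (cases "g \<tau> < \<alpha>")
    case True
    then show ?thesis using right_tendsto_eventually_less[OF lim_g True] by (auto elim: eventually_mono)
  next
    case False
    then show ?thesis using right_tendsto_eventually_ge[OF lim_g] by (auto elim: eventually_mono)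
  qed
  then have "\<forall>\<^sub>F n in sequentially. g (z n) + s = \<rho>_inv (z n)"
    by eventually_elim (simp add: s_def \<rho>_inv_def g_def Let_def)
  with right_tendsto_add_const[OF lim_g, of s] have "right_tendsto (\<lambda>n. \<rho>_inv (z n)) (g \<tau> + s)"
    by (rule right_tendsto_cong)
  moreover have "g \<tau> + s = \<rho>_inv \<tau>" by (simp add: s_def \<rho>_inv_def g_def Let_def)
  ultimately show "right_tendsto (\<lambda>n. \<rho>_inv (z n)) (\<rho>_inv \<tau>)" by simp
qed

end

section \<open>Recurrence of orbits of the circle map\<close>

context abc_hyps
begin

definition \<rho>_orbit :: "(nat \<Rightarrow> real) \<Rightarrow> bool" where
  "\<rho>_orbit \<phi> \<longleftrightarrow> (\<forall>n. \<phi> n \<in> D \<and> \<phi> (Suc n) = \<rho> (\<phi> n))"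

lemma \<rho>_orbit_pair:
  assumes orbit: "\<rho>_orbit \<phi>" and d: "0 < d" "d < b - a" and ij: "\<phi> j = \<phi> i + d"
  shows "\<phi> (j + k) = \<phi> (i + k) + d \<or> (\<exists>k'\<le>k. \<phi> (j + k') < d)"
proof (induction k)
  case 0
  then show ?case using ij by simp
next
  case (Suc k)
  then show ?case
  proof
    assume e: "\<phi> (j + k) = \<phi> (i + k) + d"
    have "\<rho> (\<phi> (i + k) + d) = \<rho> (\<phi> (i + k)) + d \<or> \<rho> (\<phi> (i + k) + d) < d"
      using orbit e d by (intro \<rho>_add_small) (metis \<rho>_orbit_def)+
    then show ?case using orbit e unfolding \<rho>_orbit_def by (metis add_Suc_right order.refl)
  qed (use le_SucI in blast)
qed

(* Two orbit points just left of l at distance d < b - a move rigidly together until the upper one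
   drops below d; otherwise the upper partner of a later orbit point close to l lands in [l, l + e0). *)
lemma \<rho>_orbit_right_accumulation_0:
  assumes orbit: "\<rho>_orbit \<phi>" and "inj \<phi>"
    and acc: "\<And>e M. 0 < e \<Longrightarrow> \<exists>n\<ge>M. \<bar>\<phi> n - l\<bar> < e"
    and not_right: "\<not> right_accumulation \<phi> l"
  shows "right_accumulation \<phi> 0"
proof -
  obtain \<epsilon>0 M0 where \<epsilon>0: "0 < \<epsilon>0" and M0: "\<And>n. M0 \<le> n \<Longrightarrow> \<not> (l \<le> \<phi> n \<and> \<phi> n < l + \<epsilon>0)"
    using not_right unfolding right_accumulation_def frequently_sequentially by auto
  have below: "\<phi> n < l" if "M0 \<le> n" "\<bar>\<phi> n - l\<bar> < \<epsilon>0" for n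
    using M0[OF that(1)] that(2) by auto
  show ?thesis
    unfolding right_accumulation_def frequently_sequentially
  proof (intro allI impI)
    fix \<epsilon> :: real and M :: nat
    assume "0 < \<epsilon>"
    define \<delta> where "\<delta> = min \<epsilon> (min \<epsilon>0 (b - a))"
    have \<delta>: "0 < \<delta>" "\<delta> \<le> \<epsilon>" "\<delta> \<le> \<epsilon>0" "\<delta> \<le> b - a"
      using \<open>0 < \<epsilon>\<close> \<epsilon>0 a_less_b by (auto simp: \<delta>_def)
    obtain i where i: "max M M0 \<le> i" "\<bar>\<phi> i - l\<bar> < \<delta>" using acc[OF \<delta>(1)] by blast
    obtain j where j: "Suc i \<le> j" "\<bar>\<phi> j - l\<bar> < \<delta>" using acc[OF \<delta>(1)] by blast
    have "\<phi> i \<noteq> \<phi> j" using \<open>inj \<phi>\<close> j(1) by (metis Suc_le_eq inj_eq less_irrefl)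
    moreover have "\<phi> i < l" using i \<delta> by (intro below) auto
    moreover have "\<phi> j < l" using i j \<delta> by (intro below) auto
    ultimately have "\<exists>i' j'. max M M0 \<le> i' \<and> max M M0 \<le> j' \<and> \<phi> i' < \<phi> j' \<and>
        l - \<delta> < \<phi> i' \<and> \<phi> j' < l"
    proof (cases "\<phi> i < \<phi> j")
      case True
      moreover have "l - \<delta> < \<phi> i" using i(2) by (simp add: abs_less_iff)
      moreover have "max M M0 \<le> j" using i(1) j(1) by simp
      ultimately show ?thesis using i(1) \<open>\<phi> j < l\<close> by blast
    next
      case False
      with \<open>\<phi> i \<noteq> \<phi> j\<close> have "\<phi> j < \<phi> i" by linarith
      moreover have "l - \<delta> < \<phi> j" using j(2) by (simp add: abs_less_iff)
      moreover have "max M M0 \<le> j" using i(1) j(1) by simp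
      ultimately show ?thesis using i(1) \<open>\<phi> i < l\<close> by blast
    qed
    then obtain i' j' where ij': "max M M0 \<le> i'" "max M M0 \<le> j'" "\<phi> i' < \<phi> j'"
      "l - \<delta> < \<phi> i'" "\<phi> j' < l"
      by blast
    define d where "d = \<phi> j' - \<phi> i'"
    have d: "0 < d" "d < \<delta>" using ij' by (auto simp: d_def)
    obtain n where n: "max i' M0 \<le> n" "\<bar>\<phi> n - l\<bar> < d" using acc[OF d(1)] by blast
    have "\<phi> n < l" using n d \<delta> by (intro below) auto
    have "d < b - a" "\<phi> j' = \<phi> i' + d" using d \<delta> by (simp_all add: d_def)
    from \<rho>_orbit_pair[OF orbit d(1) this, of "n - i'"] n(1)
    have "\<phi> (j' + (n - i')) = \<phi> n + d \<or> (\<exists>k'\<le>n - i'. \<phi> (j' + k') < d)"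
      by simp
    then show "\<exists>n\<ge>M. 0 \<le> \<phi> n \<and> \<phi> n < 0 + \<epsilon>"
    proof
      assume "\<phi> (j' + (n - i')) = \<phi> n + d"
      then have "l \<le> \<phi> (j' + (n - i')) \<and> \<phi> (j' + (n - i')) < l + \<epsilon>0"
        using n(2) \<open>\<phi> n < l\<close> d \<delta> by (simp add: abs_less_iff)
      with M0[of "j' + (n - i')"] ij'(2) show ?thesis by simp
    next
      assume "\<exists>k'\<le>n - i'. \<phi> (j' + k') < d"
      then obtain k' where "\<phi> (j' + k') < d" by blast
      moreover have "0 \<le> \<phi> (j' + k')" using orbit by (simp add: \<rho>_orbit_def D_def)
      ultimately show ?thesis using ij'(2) d \<delta> by (intro exI[of _ "j' + k'"]) auto
    qed
  qed
qed

lemma \<rho>_orbit_right_accumulation: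
  assumes orbit: "\<rho>_orbit \<phi>"
  shows "\<exists>\<tau>. right_accumulation \<phi> \<tau>"
proof (cases "inj \<phi>")
  case False
  then obtain i j where "i < j" "\<phi> i = \<phi> j"
    unfolding inj_def by (metis linorder_neqE_nat)
  then show ?thesis
    using periodic_orbit_right_accumulation[of \<phi> \<rho>] orbit by (auto simp: \<rho>_orbit_def)
next
  case True
  have "\<phi> n \<in> cball 0 a" for n
    using orbit unfolding \<rho>_orbit_def by (auto simp: D_def dist_real_def dest!: spec[of _ n])
  then have "range \<phi> \<subseteq> cball 0 a" by blast
  then have "bounded (range \<phi>)" by (rule bounded_subset[OF bounded_cball])
  then obtain l r where r: "strict_mono r" "(\<phi> \<circ> r) \<longlonglongrightarrow> l"
    using bounded_imp_convergent_subsequence by blast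
  have acc: "\<exists>n\<ge>M. \<bar>\<phi> n - l\<bar> < e" if e: "0 < e" for e M
  proof -
    obtain K where "\<forall>n\<ge>K. dist (\<phi> (r n)) l < e"
      using r(2) e unfolding lim_sequentially by auto
    moreover have "M \<le> r (max K M)" using seq_suble[OF r(1), of "max K M"] by simp
    ultimately show ?thesis by (auto simp: dist_real_def)
  qed
  show ?thesis
    using \<rho>_orbit_right_accumulation_0[OF orbit True acc] by blast
qed

lemma \<rho>_orbit_forward:
  assumes orbit: "\<rho>_orbit \<phi>" and lim: "right_tendsto (\<lambda>n. \<phi> (r n)) \<tau>"
  shows "right_tendsto (\<lambda>n. \<phi> (r n + j)) ((\<rho> ^^ j) \<tau>) \<and> (\<rho> ^^ j) \<tau> \<in> D"
proof -
  have inD: "\<forall>\<^sub>F n in sequentially. \<phi> (f n) \<in> D" for f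
    using orbit by (simp add: \<rho>_orbit_def)
  show ?thesis
  proof (induction j)
    case 0
    then show ?case using lim right_tendsto_in_D[OF lim inD] by simp
  next
    case (Suc j)
    have "right_tendsto (\<lambda>n. \<phi> (r n + Suc j)) ((\<rho> ^^ Suc j) \<tau>)"
      using right_tendsto_\<rho>[OF conjunct1[OF Suc] inD] orbit by (simp add: \<rho>_orbit_def)
    then show ?case using right_tendsto_in_D[OF _ inD[of "\<lambda>n. r n + Suc j"]] by simp
  qed
qed

lemma \<rho>_orbit_backward:
  assumes orbit: "\<rho>_orbit \<phi>" and r: "\<And>n. n \<le> r n" and lim: "right_tendsto (\<lambda>n. \<phi> (r n)) \<tau>"
  shows "right_tendsto (\<lambda>n. \<phi> (r n - j)) ((\<rho>_inv ^^ j) \<tau>) \<and> (\<rho>_inv ^^ j) \<tau> \<in> A"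
proof (induction j)
  have "\<forall>\<^sub>F n in sequentially. \<phi> (r n - j) \<in> A \<and> \<rho>_inv (\<phi> (r n - j)) = \<phi> (r n - Suc j)" for j
    using eventually_ge_at_top[of "Suc j"]
  proof eventually_elim
    case (elim n)
    then have "\<phi> (r n - j) = \<rho> (\<phi> (r n - Suc j))"
      using orbit r[of n] unfolding \<rho>_orbit_def by (metis Suc_diff_Suc le_trans Suc_le_lessD)
    then show ?case using \<rho>_in_A_and_\<rho>_inv_\<rho> orbit by (simp add: \<rho>_orbit_def)
  qed
  note step = this
  {
    case 0
    have "\<forall>\<^sub>F n in sequentially. \<phi> (r n) \<in> A" using step[of 0] by (auto elim: eventually_mono)
    then show ?case using lim right_tendsto_\<rho>_inv(1)[OF lim] by simp
  next
    case (Suc j)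
    have "\<forall>\<^sub>F n in sequentially. \<phi> (r n - j) \<in> A" using step[of j] by eventually_elim simp
    then have "right_tendsto (\<lambda>n. \<rho>_inv (\<phi> (r n - j))) ((\<rho>_inv ^^ Suc j) \<tau>)"
      using right_tendsto_\<rho>_inv(2)[OF conjunct1[OF Suc]] by simp
    then have lim': "right_tendsto (\<lambda>n. \<phi> (r n - Suc j)) ((\<rho>_inv ^^ Suc j) \<tau>)"
      by (rule right_tendsto_cong) (use step[of j] in \<open>auto elim: eventually_mono\<close>)
    have "\<forall>\<^sub>F n in sequentially. \<phi> (r n - Suc j) \<in> A" using step[of "Suc j"] by eventually_elim simp
    then show ?case using right_tendsto_\<rho>_inv(1)[OF lim'] lim' by simp
  }
qed

lemma \<rho>_orbit_two_sided:
  assumes orbit: "\<rho>_orbit \<phi>" and acc: "right_accumulation \<phi> \<tau>"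
  shows "\<exists>v :: int \<Rightarrow> real. \<forall>k. v k \<in> D \<and> v (k + 1) = \<rho> (v k)"
proof -
  obtain r where r: "\<And>n. n \<le> r n" and lim: "right_tendsto (\<lambda>n. \<phi> (r n)) \<tau>"
    using right_accumulation_imp_subseq[OF acc] by blast
  have fw: "(\<rho> ^^ j) \<tau> \<in> D" for j
    using \<rho>_orbit_forward[OF orbit lim] by blast
  have bw: "(\<rho>_inv ^^ j) \<tau> \<in> A" for j
    using \<rho>_orbit_backward[OF orbit r lim] by blast
  define v where "v k = (if 0 \<le> k then (\<rho> ^^ nat k) \<tau> else (\<rho>_inv ^^ nat (- k)) \<tau>)" for k
  have "v k \<in> D \<and> v (k + 1) = \<rho> (v k)" for k
  proof (cases "0 \<le> k")
    case True
    then have "nat (k + 1) = Suc (nat k)" by simp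
    then show ?thesis using True fw by (simp add: v_def)
  next
    case False
    define j where "j = nat (- k - 1)"
    have "nat (- k) = Suc j" using False by (simp add: j_def)
    then have vk: "v k = \<rho>_inv ((\<rho>_inv ^^ j) \<tau>)" using False by (simp add: v_def)
    have "v (k + 1) = (\<rho>_inv ^^ j) \<tau>"
      using False by (cases "k + 1 = 0") (simp_all add: v_def j_def nat_diff_distrib)
    then show ?thesis using vk \<rho>_inv_in_D_and_\<rho>_\<rho>_inv[OF bw[of j]] by simp
  qed
  then show ?thesis by blast
qed

end

section \<open>Two-sided orbits of the circle map give points of S\<close>

locale abc_two_sided_orbit = abc_hyps +
  fixes v :: "int \<Rightarrow> real"
  assumes v_in_D: "v k \<in> D" and v_step: "v (k + 1) = \<rho> (v k)"
begin

(* lift k lifts v k to the line along the steps of R; the solution x is the indicator of range pos. *)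
definition gap :: "int \<Rightarrow> int" where
  "gap k = (if v k < \<alpha> then N + 1 else N)"

definition pos :: "int \<Rightarrow> int" where
  "pos k = (if 0 \<le> k then (\<Sum>i\<in>{0..<k}. gap i) else - (\<Sum>i\<in>{k..<0}. gap i))"

definition lift :: "int \<Rightarrow> real" where
  "lift k = v 0 + b * of_int (pos k)"

lemma v_bounds: "0 \<le> v k" "v k < a"
  using v_in_D[of k] by (auto simp: D_def)

lemma pos_0 [simp]: "pos 0 = 0"
  by (simp add: pos_def)

lemma pos_step: "pos (k + 1) = pos k + gap k"
proof (cases "0 \<le> k")
  case True
  then have "{0..<k + 1} = insert k {0..<k}" by auto
  then show ?thesis using True by (simp add: pos_def add.commute)
next
  case False
  then have "{k..<0} = insert k {k + 1..<0}" by auto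
  then have "(\<Sum>i\<in>{k..<0}. gap i) = gap k + (\<Sum>i\<in>{k + 1..<0}. gap i)" by simp
  moreover have "pos (k + 1) = - (\<Sum>i\<in>{k + 1..<0}. gap i)"
    using False by (cases "k + 1 = 0") (auto simp: pos_def)
  ultimately show ?thesis using False by (simp add: pos_def)
qed

lemma lift_step: "lift (k + 1) = lift k + b * of_int (gap k)"
  by (simp add: lift_def pos_step distrib_left)

lemma lift_step_cases:
  "v k < \<alpha> \<Longrightarrow> lift (k + 1) = lift k + of_int N * b + b"
  "\<not> v k < \<alpha> \<Longrightarrow> lift (k + 1) = lift k + of_int N * b"
  using lift_step[of k] by (simp_all add: gap_def algebra_simps)

lemma lift_rmod: "lift k rmod a = v k"
proof (induction k rule: int_induct[where k = 0])
  case base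
  then show ?case using v_bounds[of 0] by (simp add: lift_def)
next
  case (step1 i)
  have "lift (i + 1) rmod a = (lift i rmod a + b * of_int (gap i)) rmod a"
    by (simp add: lift_step rmod_add_rmod_left)
  also have "\<dots> = v (i + 1)"
    using step1 v_step[of i] by (simp add: \<rho>_def gap_def algebra_simps)
  finally show ?case .
next
  case (step2 i)
  have "(lift (i - 1) + b * of_int (gap (i - 1))) rmod a = (v (i - 1) + b * of_int (gap (i - 1))) rmod a"
    using step2 v_step[of "i - 1"] lift_step[of "i - 1"]
    by (simp add: \<rho>_def gap_def algebra_simps)
  then have "lift (i - 1) rmod a = v (i - 1) rmod a" by (rule rmod_add_right_cancel)
  then show ?case using v_bounds[of "i - 1"] a_pos by simp
qed

lemma lift_decomp: "lift k = v k + a * of_int \<lfloor>lift k / a\<rfloor>"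
  using rmod_decomp[OF a_pos, of "lift k"] by (simp add: lift_rmod mult.commute)

lemma pos_grows: "pos k + 2 * int n \<le> pos (k + int n)"
proof (induction n)
  case (Suc n)
  have "k + int (Suc n) = (k + int n) + 1" by simp
  then have "pos (k + int (Suc n)) = pos (k + int n) + gap (k + int n)"
    by (simp only: pos_step)
  with Suc N_ge_2 show ?case by (simp add: gap_def)
qed simp

lemma lift_strict_mono: "k < l \<Longrightarrow> lift k < lift l"
  using pos_grows[of k "nat (l - k)"] b_pos by (simp add: lift_def)

lemma lift_mono: "k \<le> l \<Longrightarrow> lift k \<le> lift l"
  using lift_strict_mono[of k l] by (cases "k = l") auto

lemma lift_unbounded: "\<exists>k. X \<le> lift k" "\<exists>k. lift k < X"
proof -
  obtain n :: nat where "\<bar>X - v 0\<bar> / (2 * b) < real n" using reals_Archimedean2 by blast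
  then have n: "\<bar>X - v 0\<bar> < b * (2 * real n)" using b_pos by (simp add: field_simps)
  have "real_of_int (2 * int n) \<le> of_int (pos (int n))"
    and "real_of_int (pos (- int n)) \<le> of_int (- 2 * int n)"
    unfolding of_int_le_iff using pos_grows[of 0 n] pos_grows[of "- int n" n] by simp_all
  then have "2 * real n \<le> of_int (pos (int n))" and "of_int (pos (- int n)) \<le> - (2 * real n)"
    by simp_all
  then have "b * (2 * real n) \<le> b * of_int (pos (int n))"
    and "b * of_int (pos (- int n)) \<le> b * - (2 * real n)"
    using b_pos by (intro mult_left_mono; simp)+
  with n have "X \<le> lift (int n)" and "lift (- int n) < X"
    by (simp_all add: lift_def abs_less_iff)
  then show "\<exists>k. X \<le> lift k" "\<exists>k. lift k < X" by blast+
qed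

lemma lift_less_shift: "lift k < a * of_int m + v k \<Longrightarrow> lift k \<le> a * of_int m + v k - a"
proof -
  assume "lift k < a * of_int m + v k"
  then have "a * of_int \<lfloor>lift k / a\<rfloor> < a * of_int m"
    using lift_decomp[of k] by linarith
  then have "\<lfloor>lift k / a\<rfloor> < m"
    using a_pos by (simp add: mult_less_cancel_left_pos)
  then have "a * of_int \<lfloor>lift k / a\<rfloor> \<le> a * of_int (m - 1)"
    using a_pos by (intro mult_left_mono) simp_all
  then show ?thesis using lift_decomp[of k] by (simp add: algebra_simps)
qed

lemma window_no_two: "\<not> (a * of_int m \<le> lift k \<and> lift (k + 1) < a * of_int m + c)"
proof
  assume window: "a * of_int m \<le> lift k \<and> lift (k + 1) < a * of_int m + c"
  show False
  proof (cases "v k < \<alpha>")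
    case True
    then show False
      using window lift_step_cases(1)[OF True] c_eq a_less_b \<beta>_lt by simp
  next
    case False
    then have "\<beta> \<le> v k" using v_in_D[of k] by (simp add: D_iff)
    moreover have "lift k < a * of_int m + \<beta>"
      using window lift_step_cases(2)[OF False] c_eq by simp
    ultimately show False
      using lift_less_shift[of k m] window v_bounds[of k] by simp
  qed
qed

lemma window_exists: "\<exists>k. a * of_int m \<le> lift k \<and> lift k < a * of_int m + c"
proof -
  define X where "X = a * of_int m + c"
  obtain k0 k1 where "lift k0 < X" "X \<le> lift k1" using lift_unbounded by metis
  then have "k0 < k1" using lift_mono by (meson linorder_not_le order_less_le_trans)
  then obtain k where k: "lift k < X" "\<not> lift (k + 1) < X"
    using int_crossing[of "\<lambda>k. lift k < X" k0 "nat (k1 - k0)"] \<open>lift k0 < X\<close> \<open>X \<le> lift k1\<close>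
    by auto
  have "a * of_int m \<le> lift k"
  proof (rule ccontr)
    assume below: "\<not> a * of_int m \<le> lift k"
    show False
    proof (cases "v k < \<alpha>")
      case True
      have "lift k \<le> a * of_int m + v k - a"
        using below v_bounds[of k] by (intro lift_less_shift) simp
      then show False
        using k lift_step_cases(1)[OF True] True c_eq by (simp add: X_def \<alpha>_def)
    next
      case False
      then show False
        using k below lift_step_cases(2)[OF False] c_eq \<beta>_gt a_less_b \<alpha>_pos \<alpha>_less_\<beta>
        by (simp add: X_def)
    qed
  qed
  with k show ?thesis by (auto simp: X_def)
qed

lemma window_unique:
  assumes "a * of_int m \<le> lift k" "lift k < a * of_int m + c"
    and "a * of_int m \<le> lift k'" "lift k' < a * of_int m + c"
  shows "k = k'"
proof (rule ccontr)
  assume "k \<noteq> k'"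
  then consider "k + 1 \<le> k'" | "k' + 1 \<le> k" by linarith
  then show False
    by cases (use assms lift_mono window_no_two in \<open>fastforce+\<close>)
qed

lemma v_0_in_S: "v 0 \<in> S_set a b c"
proof -
  define x where "x j = (if j \<in> range pos then 1 else 0 :: real)" for j
  have "x \<in> B0" by (auto simp: B0_def x_def intro: range_eqI[of _ _ 0])
  moreover have "M_apply a b c (v 0) x m = 1" for m
  proof -
    define I where "I = {k::int. v 0 - a * of_int m + b * of_int k \<in> {0..<c}}"
    have I_iff: "pos k \<in> I \<longleftrightarrow> a * of_int m \<le> lift k \<and> lift k < a * of_int m + c" for k
      by (auto simp: I_def lift_def)
    obtain k0 where k0: "a * of_int m \<le> lift k0" "lift k0 < a * of_int m + c"
      using window_exists by blast
    have "I \<subseteq> {\<lfloor>(a * of_int m - v 0) / b\<rfloor>..\<lceil>(a * of_int m - v 0 + c) / b\<rceil>}"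
    proof
      fix k assume "k \<in> I"
      then have "(a * of_int m - v 0) / b \<le> of_int k" "of_int k \<le> (a * of_int m - v 0 + c) / b"
        using b_pos by (auto simp: I_def field_simps)
      then show "k \<in> {\<lfloor>(a * of_int m - v 0) / b\<rfloor>..\<lceil>(a * of_int m - v 0 + c) / b\<rceil>}"
        by (auto simp: floor_le_iff le_ceiling_iff)
    qed
    then have "finite I" by (rule finite_subset) simp
    have "x j = (if j = pos k0 then 1 else 0)" if "j \<in> I" for j
      using that window_unique[OF k0] I_iff by (auto simp: x_def)
    then have "M_apply a b c (v 0) x m = (\<Sum>j\<in>I. if j = pos k0 then 1 else 0)"
      unfolding M_apply_def I_def[symmetric] by (rule sum.cong[OF refl])
    also have "\<dots> = 1" using \<open>finite I\<close> I_iff k0 by simp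
    finally show ?thesis .
  qed
  ultimately show ?thesis by (auto simp: S_set_def)
qed

end

context abc_hyps
begin

lemma avoiding_orbit_imp_S_nonempty:
  assumes avoid: "\<And>k. (R a b c ^^ k) t rmod a \<notin> {\<alpha>..<\<beta>}"
  shows "S_set a b c \<noteq> {}"
proof -
  define \<phi> where "\<phi> k = (R a b c ^^ k) t rmod a" for k
  have "\<phi> n \<in> D \<and> \<phi> (Suc n) = \<rho> (\<phi> n)" for n
  proof
    show "\<phi> n \<in> D" using avoid[of n] rmod_a_bounds by (simp add: \<phi>_def D_def)
    show "\<phi> (Suc n) = \<rho> (\<phi> n)" using rmod_R[OF avoid[of n]] by (simp add: \<phi>_def)
  qed
  then have orbit: "\<rho>_orbit \<phi>" by (simp add: \<rho>_orbit_def)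
  then obtain \<tau> where "right_accumulation \<phi> \<tau>"
    using \<rho>_orbit_right_accumulation by blast
  from \<rho>_orbit_two_sided[OF orbit this]
  obtain v :: "int \<Rightarrow> real" where "\<forall>k. v k \<in> D \<and> v (k + 1) = \<rho> (v k)" by blast
  then interpret abc_two_sided_orbit a b c v
    by unfold_locales simp_all
  show ?thesis using v_0_in_S by blast
qed

lemma S_empty_imp_orbit_trapped:
  assumes "S_set a b c = {}"
  shows "\<exists>k. (R a b c ^^ k) t rmod a \<in> {\<alpha>..<\<beta>}"
proof (rule ccontr)
  assume "\<nexists>k. (R a b c ^^ k) t rmod a \<in> {\<alpha>..<\<beta>}"
  then have "S_set a b c \<noteq> {}" by (intro avoiding_orbit_imp_S_nonempty) blast
  with assms show False by simp
qed

end

theorem theoremC1: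
  fixes a b c :: real
  assumes "0 < a" "a < b" "b < c"
    and "b - a < c0 a b c" "c0 a b c < a"
    and "0 < c1 a b c" "c1 a b c < 2 * a - b"
    and "\<lfloor>c / b\<rfloor> \<ge> 2"
  shows "S_set a b c = {} \<longleftrightarrow>
    (\<forall>t::real. \<exists>t0 \<in> {c0 a b c + a - b..<c0 a b c}.
       \<forall>f :: real \<Rightarrow> complex. continuous_on UNIV f \<and> (\<forall>x. f (x + a) = f x) \<longrightarrow>
         (\<lambda>n. (1 / of_nat n) * (\<Sum>k<n. f ((R a b c ^^ k) t))) \<longlonglongrightarrow> f t0)"
    (is "_ \<longleftrightarrow> (\<forall>t. \<exists>t0 \<in> _. ?converges t t0)")
proof -
  interpret abc_hyps a b c using assms by unfold_locales
  have hole: "{c0 a b c + a - b..<c0 a b c} = {\<alpha>..<\<beta>}" by (simp add: \<alpha>_def \<beta>_def)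
  show ?thesis unfolding hole
  proof (intro iffI allI)
    fix t
    assume "S_set a b c = {}"
    then obtain k where trapped: "(R a b c ^^ k) t rmod a \<in> {\<alpha>..<\<beta>}"
      using S_empty_imp_orbit_trapped by blast
    have "?converges t ((R a b c ^^ k) t rmod a)"
      using trapped_orbit_averages[OF trapped] by blast
    with trapped show "\<exists>t0 \<in> {\<alpha>..<\<beta>}. ?converges t t0" ..
  next
    assume converges: "\<forall>t. \<exists>t0 \<in> {\<alpha>..<\<beta>}. ?converges t t0"
    show "S_set a b c = {}"
    proof (rule equals0I)
      fix t assume "t \<in> S_set a b c"
      obtain t0 where "t0 \<in> {\<alpha>..<\<beta>}" "?converges t t0"
        using converges by blast
      with avoiding_orbit_averages_not_tendsto[OF S_orbit_avoids_hole[OF \<open>t \<in> S_set a b c\<close>]]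
      show False by blast
    qed
  qed
qed

end
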